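(* (Refinement Validity.) Consider an execution of the Aegean protocol described in the context, under the stated failure model, network model and Reasoning Refinement assumption. If the protocol outputs a solution $s$, then $s$ satisfies refinement validity: $Q(t,s)\ge Q(t,s^* )$ for some majority optimal solution $s^*$.
   Context: Setting. A single task description $t$ (a string) is given to all agents. A Quality Oracle is a deterministic function $Q:\Sigma^*\times\Sigma^*\to\mathbb{R}$ that maps a task description and a solution string to a real number, the quality of the solution for the task; it is unknown to the agents. There are $N$ agents $A_0,\dots,A_{N-1}$. Each agent is a state machine with an internal context $c$ and a reasoning function $\mathcal{R}:(c,\text{string})\mapsto(c',\text{string})$; the input string is either the task description or a string combining a list of solutions with their reasoning traces, and the output string contains a solution together with a reasoning trace (context input/output is left implicit, writing $r\gets\mathcal{R}(x)$). Majority optimal solution: supposing each agent individually generates a solution to $t$, a majority optimal solution is a solution of maximal $Q$-quality among the individual solutions generated by some simple majority of the agents. Reasoning Refinement assumption: for any set $S$ of solutions (with reasoning traces) and any agent, if the agent applies its reasoning function to a string $\bar s$ combining all solutions in $S$, then $Q(t,\mathcal{R}(\bar s))\ge Q(t,s)$ for every $s\in S$. Failure/network model: agents fail only by stopping (fail-stop; a failed agent stops responding but never deviates from the protocol); at most $\lceil (N-1)/2\rceil$ agents fail; a quorum is any set of a majority of the agents, so any two quorums intersect. Agents are fully connected and the network is partially synchronous: after some finite but unknown time, every message is delivered within a bounded delay. The Aegean protocol. Execution proceeds in terms, numbered increasingly; each agent keeps a term number, a role (leader, candidate or worker), an id, a round number, and a stored refinement set refmset. Leader election: an agent entering a new term broadcasts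 RequestVote(term) and becomes candidate; an agent receiving a RequestVote with a higher term adopts that term, becomes worker and replies Vote; each agent casts at most one vote per term (a candidate votes for itself); a candidate receiving votes from a quorum of distinct agents for its term becomes leader; on lack of progress agents time out, advance the term and retry. Hence there is at most one leader per term. First term: the leader broadcasts Task(term, $t$); each agent computes $s\gets\mathcal{R}(t)$ and sends Solution(term, id, $s$) to the leader; the leader collects Solution messages from a quorum of distinct agents (including itself), lets $\bar R$ be the set of these solutions, sets round to $1$ and broadcasts RefmSet(term, round, $\bar R$). Refinement rounds: an agent receiving a RefmSet with round number no less than its own stores $\bar R$ as its refmset, updates its round number, computes $r\gets\mathcal{R}(\bar R)$ and sends Refm(term, id, round, $r$) to the leader; the leader collects Refm messages with matching round from a quorum of distinct agents, lets $\bar R$ be the set of these refined solutions (the refinement set of that round), inputs (term, round, $\bar R$) to the refinement decision engine, increments its round number and broadcasts RefmSet(term, round, $\bar R$); this repeats until a solution is output. Leader change: a newly elected leader broadcasts NewTerm(term); an agent receiving NewTerm with a term greater than its own replies NewTermAck(new term, its current term, id, its round, its refmset) and adopts the new term; upon NewTermAcks with matching new term from a quorum, the new leader selects the ack with the highest (old) term, breaking ties by highest round, sets its round to $1$ and broadcasts RefmSet(term, 1, $\bar R$) with $\bar R$ taken from the selected ack; then normal refinement rounds proceed. Refinement decision engine: only the leader outputs solutions; in a term, a solution output "in round $i$" must belong to the refinement set of round $i$, may only be output once the leader has collected the refinement set of round $i+1$, and at most one solution is output per round. Users may impose additional output criteria (e.g. requiring at least $\alpha$ semantically equivalent solutions in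 a refinement set, or that a solution appear in $\beta$ consecutive rounds' refinement sets). *)

theory Defs
  imports Complex_Main
begin

text \<open>Agents are 0, ..., N-1. Strings (task descriptions, solutions with reasoning traces)
  have abstract type 's; agent reasoning contexts have abstract type 'c.
  The reasoning function of agent i is R i :: 'c => 's => 'c * 's;
  combine S is the string combining all solutions of a set S.
  The network is modelled as the set of all messages ever sent; any agent may
  process any sent message addressed to it at any time (asynchrony, reordering,
  duplication). This over-approximates partially synchronous executions.\<close>

datatype role = Leader | Candidate | Worker

datatype lphase = LNone | LTask | LAck | LRefine

datatype 's msg =
    RequestVote nat nat                         \<comment> \<open>term, candidate\<close>
  | Vote nat nat nat                            \<comment> \<open>term, voter, candidate\<close>
  | Task nat 's nat                             \<comment> \<open>term, task, leader\<close>
  | Solution nat nat 's nat                     \<comment> \<open>term, id, solution, leader\<close>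
  | RefmSet nat nat "'s set" nat                \<comment> \<open>term, round, set, leader\<close>
  | Refm nat nat nat 's nat                     \<comment> \<open>term, id, round, refined solution, leader\<close>
  | NewTerm nat nat                             \<comment> \<open>term, leader\<close>
  | NewTermAck nat nat nat nat "'s set option" nat
      \<comment> \<open>new term, old term, id, round, refmset, leader\<close>

record ('s, 'c) gstate =
  aterm   :: "nat \<Rightarrow> nat"
  arole   :: "nat \<Rightarrow> role"
  around  :: "nat \<Rightarrow> nat"
  arefm   :: "nat \<Rightarrow> 's set option"        \<comment> \<open>stored refmset (None: none stored yet)\<close>
  arterm  :: "nat \<Rightarrow> nat"                 \<comment> \<open>term in which the refmset was stored\<close>
  actx    :: "nat \<Rightarrow> 'c"
  avoted  :: "nat \<Rightarrow> nat \<Rightarrow> nat option"     \<comment> \<open>vote cast by agent in a term\<close>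
  lph     :: "nat \<Rightarrow> lphase"               \<comment> \<open>phase of an agent acting as leader\<close>
  lround  :: "nat \<Rightarrow> nat"                 \<comment> \<open>round counter of an agent acting as leader\<close>
  alive   :: "nat \<Rightarrow> bool"
  msgs    :: "'s msg set"
  rsets   :: "nat \<Rightarrow> nat \<Rightarrow> 's set option"  \<comment> \<open>refinement set of (term, round) collected by the leader\<close>
  outd    :: "nat \<Rightarrow> nat \<Rightarrow> bool"         \<comment> \<open>a solution was output in (term, round)\<close>
  outputs :: "'s set"

definition quorum :: "nat \<Rightarrow> nat set \<Rightarrow> bool" where
  "quorum N A \<longleftrightarrow> A \<subseteq> {..<N} \<and> N < 2 * card A"

definition maxfail :: "nat \<Rightarrow> nat" where
  "maxfail N = nat \<lceil>(real N - 1) / 2\<rceil>"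

definition init_state :: "(nat \<Rightarrow> 'c) \<Rightarrow> ('s, 'c) gstate" where
  "init_state ctx0 = \<lparr> aterm = (\<lambda>_. 0), arole = (\<lambda>_. Worker), around = (\<lambda>_. 0),
     arefm = (\<lambda>_. None), arterm = (\<lambda>_. 0), actx = ctx0, avoted = (\<lambda>_ _. None),
     lph = (\<lambda>_. LNone), lround = (\<lambda>_. 0), alive = (\<lambda>_. True), msgs = {},
     rsets = (\<lambda>_ _. None), outd = (\<lambda>_ _. False), outputs = {} \<rparr>"

inductive step ::
  "nat \<Rightarrow> 's \<Rightarrow> (nat \<Rightarrow> 'c \<Rightarrow> 's \<Rightarrow> 'c \<times> 's) \<Rightarrow> ('s set \<Rightarrow> 's)
   \<Rightarrow> (nat \<Rightarrow> (nat \<Rightarrow> 's set option) \<Rightarrow> nat \<Rightarrow> 's \<Rightarrow> bool)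
   \<Rightarrow> ('s, 'c) gstate \<Rightarrow> ('s, 'c) gstate \<Rightarrow> bool"
  for N t R combine crit
where
  crash: "\<lbrakk> i < N; alive \<sigma> i; card {j. j < N \<and> \<not> alive \<sigma> j} < maxfail N \<rbrakk>
    \<Longrightarrow> step N t R combine crit \<sigma> (\<sigma>\<lparr>alive := (alive \<sigma>)(i := False)\<rparr>)"
| timeout: "\<lbrakk> i < N; alive \<sigma> i; T = Suc (aterm \<sigma> i); avoted \<sigma> i T = None \<rbrakk>
    \<Longrightarrow> step N t R combine crit \<sigma> (\<sigma>\<lparr>aterm := (aterm \<sigma>)(i := T),
          arole := (arole \<sigma>)(i := Candidate),
          avoted := (avoted \<sigma>)(i := (avoted \<sigma> i)(T := Some i)),
          lph := (lph \<sigma>)(i := LNone),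
          msgs := msgs \<sigma> \<union> {RequestVote T i, Vote T i i}\<rparr>)"
| vote: "\<lbrakk> i < N; alive \<sigma> i; RequestVote T j \<in> msgs \<sigma>; aterm \<sigma> i < T; avoted \<sigma> i T = None \<rbrakk>
    \<Longrightarrow> step N t R combine crit \<sigma> (\<sigma>\<lparr>aterm := (aterm \<sigma>)(i := T),
          arole := (arole \<sigma>)(i := Worker),
          avoted := (avoted \<sigma>)(i := (avoted \<sigma> i)(T := Some j)),
          lph := (lph \<sigma>)(i := LNone),
          msgs := msgs \<sigma> \<union> {Vote T i j}\<rparr>)"
| elect: "\<lbrakk> i < N; alive \<sigma> i; arole \<sigma> i = Candidate; quorum N A;
            \<forall>j\<in>A. Vote (aterm \<sigma> i) j i \<in> msgs \<sigma> \<rbrakk>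
    \<Longrightarrow> step N t R combine crit \<sigma> (\<sigma>\<lparr>arole := (arole \<sigma>)(i := Leader),
          lph := (lph \<sigma>)(i := (if aterm \<sigma> i = 1 then LTask else LAck)),
          msgs := msgs \<sigma> \<union> {if aterm \<sigma> i = 1 then Task (aterm \<sigma> i) t i
                               else NewTerm (aterm \<sigma> i) i}\<rparr>)"
| task: "\<lbrakk> i < N; alive \<sigma> i; Task T t' j \<in> msgs \<sigma>; aterm \<sigma> i = T;
           R i (actx \<sigma> i) t' = (c', s) \<rbrakk>
    \<Longrightarrow> step N t R combine crit \<sigma> (\<sigma>\<lparr>actx := (actx \<sigma>)(i := c'),
          msgs := msgs \<sigma> \<union> {Solution T i s j}\<rparr>)"
| collect_sol: "\<lbrakk> i < N; alive \<sigma> i; arole \<sigma> i = Leader; lph \<sigma> i = LTask; quorum N A; i \<in> A;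
                  \<forall>j\<in>A. Solution (aterm \<sigma> i) j (g j) i \<in> msgs \<sigma> \<rbrakk>
    \<Longrightarrow> step N t R combine crit \<sigma> (\<sigma>\<lparr>lround := (lround \<sigma>)(i := 1),
          lph := (lph \<sigma>)(i := LRefine),
          msgs := msgs \<sigma> \<union> {RefmSet (aterm \<sigma> i) 1 (g ` A) i}\<rparr>)"
| refine: "\<lbrakk> i < N; alive \<sigma> i; RefmSet T r Rb j \<in> msgs \<sigma>; aterm \<sigma> i = T;
             arterm \<sigma> i < T \<or> around \<sigma> i \<le> r;
             R i (actx \<sigma> i) (combine Rb) = (c', r') \<rbrakk>
    \<Longrightarrow> step N t R combine crit \<sigma> (\<sigma>\<lparr>arefm := (arefm \<sigma>)(i := Some Rb),
          arterm := (arterm \<sigma>)(i := T),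
          around := (around \<sigma>)(i := r),
          actx := (actx \<sigma>)(i := c'),
          msgs := msgs \<sigma> \<union> {Refm T i r r' j}\<rparr>)"
| collect_refm: "\<lbrakk> i < N; alive \<sigma> i; arole \<sigma> i = Leader; lph \<sigma> i = LRefine; quorum N A;
                   \<forall>j\<in>A. Refm (aterm \<sigma> i) j (lround \<sigma> i) (g j) i \<in> msgs \<sigma> \<rbrakk>
    \<Longrightarrow> step N t R combine crit \<sigma> (\<sigma>\<lparr>
          rsets := (rsets \<sigma>)(aterm \<sigma> i := (rsets \<sigma> (aterm \<sigma> i))(lround \<sigma> i := Some (g ` A))),
          lround := (lround \<sigma>)(i := Suc (lround \<sigma> i)),
          msgs := msgs \<sigma> \<union> {RefmSet (aterm \<sigma> i) (Suc (lround \<sigma> i)) (g ` A) i}\<rparr>)"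
  \<comment> \<open>refinement decision engine: output a solution of round k once round k+1 is collected,
      at most one per round, subject to the user criterion crit\<close>
| output_sol: "\<lbrakk> i < N; alive \<sigma> i; arole \<sigma> i = Leader; aterm \<sigma> i = T;
             rsets \<sigma> T k = Some Rk; rsets \<sigma> T (Suc k) \<noteq> None; s \<in> Rk;
             \<not> outd \<sigma> T k; crit T (rsets \<sigma> T) k s \<rbrakk>
    \<Longrightarrow> step N t R combine crit \<sigma> (\<sigma>\<lparr>outputs := insert s (outputs \<sigma>),
          outd := (outd \<sigma>)(T := (outd \<sigma> T)(k := True))\<rparr>)"
| ack: "\<lbrakk> i < N; alive \<sigma> i; NewTerm T j \<in> msgs \<sigma>; aterm \<sigma> i \<le> T \<rbrakk>
    \<Longrightarrow> step N t R combine crit \<sigma> (\<sigma>\<lparr>aterm := (aterm \<sigma>)(i := T),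
          arole := (arole \<sigma>)(i := (if i = j then arole \<sigma> i else Worker)),
          lph := (lph \<sigma>)(i := (if i = j then lph \<sigma> i else LNone)),
          msgs := msgs \<sigma> \<union> {NewTermAck T (arterm \<sigma> i) i (around \<sigma> i) (arefm \<sigma> i) j}\<rparr>)"
| collect_ack: "\<lbrakk> i < N; alive \<sigma> i; arole \<sigma> i = Leader; lph \<sigma> i = LAck; quorum N A;
                  \<forall>j\<in>A. NewTermAck (aterm \<sigma> i) (ot j) j (rd j) (rs j) i \<in> msgs \<sigma>;
                  k \<in> A; \<forall>j\<in>A. ot j < ot k \<or> (ot j = ot k \<and> rd j \<le> rd k);
                  rs k = Some Rb \<rbrakk>
    \<Longrightarrow> step N t R combine crit \<sigma> (\<sigma>\<lparr>lround := (lround \<sigma>)(i := 1),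
          lph := (lph \<sigma>)(i := LRefine),
          msgs := msgs \<sigma> \<union> {RefmSet (aterm \<sigma> i) 1 Rb i}\<rparr>)"
| collect_ack_none: "\<lbrakk> i < N; alive \<sigma> i; arole \<sigma> i = Leader; lph \<sigma> i = LAck; quorum N A;
                  \<forall>j\<in>A. NewTermAck (aterm \<sigma> i) (ot j) j (rd j) (rs j) i \<in> msgs \<sigma>;
                  k \<in> A; \<forall>j\<in>A. ot j < ot k \<or> (ot j = ot k \<and> rd j \<le> rd k);
                  rs k = None \<rbrakk>
    \<Longrightarrow> step N t R combine crit \<sigma> (\<sigma>\<lparr>lph := (lph \<sigma>)(i := LTask),
          msgs := msgs \<sigma> \<union> {Task (aterm \<sigma> i) t i}\<rparr>)"

definition reachable ::
  "nat \<Rightarrow> 's \<Rightarrow> (nat \<Rightarrow> 'c \<Rightarrow> 's \<Rightarrow> 'c \<times> 's) \<Rightarrow> ('s set \<Rightarrow> 's)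
   \<Rightarrow> (nat \<Rightarrow> (nat \<Rightarrow> 's set option) \<Rightarrow> nat \<Rightarrow> 's \<Rightarrow> bool) \<Rightarrow> (nat \<Rightarrow> 'c)
   \<Rightarrow> ('s, 'c) gstate \<Rightarrow> bool" where
  "reachable N t R combine crit ctx0 \<sigma> \<longleftrightarrow> (step N t R combine crit)\<^sup>*\<^sup>* (init_state ctx0) \<sigma>"

definition individual :: "('s, 'c) gstate \<Rightarrow> nat \<Rightarrow> 's \<Rightarrow> bool" where
  "individual \<sigma> i s \<longleftrightarrow> (\<exists>T j. Solution T i s j \<in> msgs \<sigma>)"

definition majority_optimal ::
  "nat \<Rightarrow> 's \<Rightarrow> ('s \<Rightarrow> 's \<Rightarrow> real) \<Rightarrow> ('s, 'c) gstate \<Rightarrow> 's \<Rightarrow> bool" where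
  "majority_optimal N t Q \<sigma> s' \<longleftrightarrow>
     (\<exists>M g. quorum N M \<and> (\<forall>i\<in>M. individual \<sigma> i (g i)) \<and> s' \<in> g ` M \<and>
            (\<forall>i\<in>M. Q t (g i) \<le> Q t s'))"

end

theory Submission
  imports Defs
begin

text \<open>Call a solution valid if it is at least as good as some majority optimal solution,
  and a refinement set valid if it is finite and contains a valid solution. The first
  refinement set of a term consists of the individual solutions of a quorum, so its best
  element is itself majority optimal. By the Reasoning Refinement assumption every
  refinement of a valid set is valid; leader changes and stored refmsets only forward sets
  that were broadcast before; and outputs are taken from collected refinement sets, whose
  elements are refinements. Validity only depends on which individual solutions have been
  sent, and sent messages are never forgotten, so these facts form an inductive invariant.\<close>

lemma quorum_finite: "quorum N A \<Longrightarrow> finite A"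
  unfolding quorum_def using finite_subset by blast

lemma quorum_nonempty: "quorum N A \<Longrightarrow> A \<noteq> {}"
  unfolding quorum_def by auto

definition refinement_valid :: "nat \<Rightarrow> 's \<Rightarrow> ('s \<Rightarrow> 's \<Rightarrow> real) \<Rightarrow> ('s, 'c) gstate \<Rightarrow> 's \<Rightarrow> bool" where
  "refinement_valid N t Q \<rho> s \<longleftrightarrow> (\<exists>s'. majority_optimal N t Q \<rho> s' \<and> Q t s' \<le> Q t s)"

definition valid_refmset :: "nat \<Rightarrow> 's \<Rightarrow> ('s \<Rightarrow> 's \<Rightarrow> real) \<Rightarrow> ('s, 'c) gstate \<Rightarrow> 's set \<Rightarrow> bool" where
  "valid_refmset N t Q \<rho> S \<longleftrightarrow> finite S \<and> (\<exists>s\<in>S. refinement_valid N t Q \<rho> s)"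

lemma majority_optimal_mono:
  "msgs \<rho> \<subseteq> msgs \<rho>' \<Longrightarrow> majority_optimal N t Q \<rho> s \<Longrightarrow> majority_optimal N t Q \<rho>' s"
  unfolding majority_optimal_def individual_def by blast

lemma refinement_valid_mono:
  "msgs \<rho> \<subseteq> msgs \<rho>' \<Longrightarrow> refinement_valid N t Q \<rho> s \<Longrightarrow> refinement_valid N t Q \<rho>' s"
  unfolding refinement_valid_def by (meson majority_optimal_mono)

lemma valid_refmset_mono:
  "msgs \<rho> \<subseteq> msgs \<rho>' \<Longrightarrow> valid_refmset N t Q \<rho> S \<Longrightarrow> valid_refmset N t Q \<rho>' S"
  unfolding valid_refmset_def by (meson refinement_valid_mono)

lemma valid_refmset_solutions:
  assumes "quorum N A" and "\<forall>j\<in>A. Solution T j (g j) l \<in> msgs \<rho>"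
  shows "valid_refmset N t Q \<rho> (g ` A)"
proof -
  have "finite A" "A \<noteq> {}" using assms(1) by (simp_all add: quorum_finite quorum_nonempty)
  then have "Max ((\<lambda>j. Q t (g j)) ` A) \<in> (\<lambda>j. Q t (g j)) ` A" by simp
  then obtain m where "m \<in> A" and "Q t (g m) = Max ((\<lambda>j. Q t (g j)) ` A)" by auto
  with \<open>finite A\<close> have "\<forall>j\<in>A. Q t (g j) \<le> Q t (g m)" by simp
  with \<open>m \<in> A\<close> have "majority_optimal N t Q \<rho> (g m)"
    unfolding majority_optimal_def individual_def using assms by blast
  then show ?thesis
    unfolding valid_refmset_def refinement_valid_def using \<open>finite A\<close> \<open>m \<in> A\<close> by blast
qed

lemma refinement_valid_if_dominates:
  assumes "valid_refmset N t Q \<rho> S" and "\<forall>s0\<in>S. Q t s0 \<le> Q t s"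
  shows "refinement_valid N t Q \<rho> s"
  using assms unfolding valid_refmset_def refinement_valid_def by (meson order_trans)

lemma step_msgs_mono: "step N t R combine crit \<sigma> \<sigma>' \<Longrightarrow> msgs \<sigma> \<subseteq> msgs \<sigma>'"
  by (induction rule: step.induct) auto

fun valid_msg :: "nat \<Rightarrow> 's \<Rightarrow> ('s \<Rightarrow> 's \<Rightarrow> real) \<Rightarrow> ('s, 'c) gstate \<Rightarrow> 's msg \<Rightarrow> bool" where
  "valid_msg N t Q \<rho> (RefmSet T r S j) = valid_refmset N t Q \<rho> S"
| "valid_msg N t Q \<rho> (Refm T i r s j) = refinement_valid N t Q \<rho> s"
| "valid_msg N t Q \<rho> (NewTermAck T ot i rd (Some S) j) = valid_refmset N t Q \<rho> S"
| "valid_msg N t Q \<rho> _ = True"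

text \<open>Validity is measured against the individual solutions recorded in \<open>\<rho>\<close>, which is
  kept separate from the inspected state \<open>\<sigma>\<close> so that the invariant can be carried over to
  a later state with more messages before the next step is checked.\<close>

definition refinement_invariant ::
  "nat \<Rightarrow> 's \<Rightarrow> ('s \<Rightarrow> 's \<Rightarrow> real) \<Rightarrow> ('s, 'c) gstate \<Rightarrow> ('s, 'c) gstate \<Rightarrow> bool" where
  "refinement_invariant N t Q \<rho> \<sigma> \<longleftrightarrow>
     (\<forall>m\<in>msgs \<sigma>. valid_msg N t Q \<rho> m) \<and>
     (\<forall>i S. arefm \<sigma> i = Some S \<longrightarrow> valid_refmset N t Q \<rho> S) \<and>
     (\<forall>T k S. rsets \<sigma> T k = Some S \<longrightarrow> (\<forall>s\<in>S. refinement_valid N t Q \<rho> s)) \<and>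
     (\<forall>s\<in>outputs \<sigma>. refinement_valid N t Q \<rho> s)"

lemma valid_msg_mono:
  "msgs \<rho> \<subseteq> msgs \<rho>' \<Longrightarrow> valid_msg N t Q \<rho> m \<Longrightarrow> valid_msg N t Q \<rho>' m"
  by (induction N t Q \<rho> m rule: valid_msg.induct) (auto intro: refinement_valid_mono valid_refmset_mono)

lemma refinement_invariant_mono:
  "msgs \<rho> \<subseteq> msgs \<rho>' \<Longrightarrow> refinement_invariant N t Q \<rho> \<sigma> \<Longrightarrow> refinement_invariant N t Q \<rho>' \<sigma>"
  unfolding refinement_invariant_def by (meson refinement_valid_mono valid_refmset_mono valid_msg_mono)

lemma refinement_invariant_msg:
  "refinement_invariant N t Q \<rho> \<sigma> \<Longrightarrow> m \<in> msgs \<sigma> \<Longrightarrow> valid_msg N t Q \<rho> m"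
  by (simp add: refinement_invariant_def)

lemma refinement_invariant_step:
  assumes refinement:
      "\<And>i c S s0. i < N \<Longrightarrow> finite S \<Longrightarrow> s0 \<in> S \<Longrightarrow> Q t s0 \<le> Q t (snd (R i c (combine S)))"
    and "step N t R combine crit \<sigma> \<sigma>'" and "refinement_invariant N t Q \<rho> \<sigma>"
    and "msgs \<sigma>' \<subseteq> msgs \<rho>"
  shows "refinement_invariant N t Q \<rho> \<sigma>'"
  using assms(2-4)
proof (induction rule: step.induct)
  case (crash i \<sigma>)
  then show ?case by (simp add: refinement_invariant_def)
next
  case (timeout i \<sigma> T)
  then show ?case by (simp add: refinement_invariant_def)
next
  case (vote i \<sigma> T j)
  then show ?case by (simp add: refinement_invariant_def)
next
  case (elect i \<sigma> A)
  then show ?case by (simp add: refinement_invariant_def)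
next
  case (task i \<sigma> T t' j c' s)
  then show ?case by (simp add: refinement_invariant_def)
next
  case (collect_sol i \<sigma> A g)
  then have "\<forall>j\<in>A. Solution (aterm \<sigma> i) j (g j) i \<in> msgs \<rho>" by auto
  with \<open>quorum N A\<close> have "valid_refmset N t Q \<rho> (g ` A)"
    by (rule valid_refmset_solutions)
  with collect_sol show ?case by (simp add: refinement_invariant_def)
next
  case (refine i \<sigma> T r S j c' r')
  have S_valid: "valid_refmset N t Q \<rho> S"
    using refinement_invariant_msg[OF refine.prems(1) refine.hyps(3)] by simp
  moreover have "\<forall>s0\<in>S. Q t s0 \<le> Q t r'"
    using refinement[OF \<open>i < N\<close>, of S _ "actx \<sigma> i"] S_valid refine.hyps(6)
    unfolding valid_refmset_def by simp
  ultimately have "refinement_valid N t Q \<rho> r'" by (rule refinement_valid_if_dominates)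
  with S_valid refine show ?case by (simp add: refinement_invariant_def)
next
  case (collect_refm i \<sigma> A g)
  have refined_valid: "refinement_valid N t Q \<rho> (g j)" if "j \<in> A" for j
  proof -
    have "Refm (aterm \<sigma> i) j (lround \<sigma> i) (g j) i \<in> msgs \<sigma>"
      using collect_refm.hyps(6) that by blast
    from refinement_invariant_msg[OF collect_refm.prems(1) this] show ?thesis by simp
  qed
  obtain j where "j \<in> A" using quorum_nonempty[OF \<open>quorum N A\<close>] by blast
  with refined_valid have "valid_refmset N t Q \<rho> (g ` A)"
    using quorum_finite[OF \<open>quorum N A\<close>] unfolding valid_refmset_def by blast
  with refined_valid collect_refm show ?case by (simp add: refinement_invariant_def)
next
  case (output_sol i \<sigma> T k Rk s)
  then show ?case by (simp add: refinement_invariant_def)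
next
  case (ack i \<sigma> T j)
  then show ?case by (cases "arefm \<sigma> i") (simp_all add: refinement_invariant_def)
next
  case (collect_ack i \<sigma> A ot rd rs k S)
  have "valid_msg N t Q \<rho> (NewTermAck (aterm \<sigma> i) (ot k) k (rd k) (rs k) i)"
    using refinement_invariant_msg[OF collect_ack.prems(1)] collect_ack.hyps(6,7) by blast
  then have "valid_refmset N t Q \<rho> S" using \<open>rs k = Some S\<close> by simp
  with collect_ack show ?case by (simp add: refinement_invariant_def)
next
  case (collect_ack_none i \<sigma> A ot rd rs k)
  then show ?case by (simp add: refinement_invariant_def)
qed

lemma refinement_invariant_reachable:
  assumes refinement:
      "\<And>i c S s0. i < N \<Longrightarrow> finite S \<Longrightarrow> s0 \<in> S \<Longrightarrow> Q t s0 \<le> Q t (snd (R i c (combine S)))"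
    and "reachable N t R combine crit ctx0 \<sigma>"
  shows "refinement_invariant N t Q \<sigma> \<sigma>"
proof -
  have "(step N t R combine crit)\<^sup>*\<^sup>* (init_state ctx0) \<sigma>"
    using assms(2) unfolding reachable_def .
  then show ?thesis
  proof (induction rule: rtranclp_induct)
    case base
    show ?case by (simp add: refinement_invariant_def init_state_def)
  next
    case (step \<sigma> \<sigma>')
    from step.IH step_msgs_mono[OF step.hyps(2)]
    have "refinement_invariant N t Q \<sigma>' \<sigma>" by (rule refinement_invariant_mono[rotated])
    from refinement_invariant_step[OF refinement step.hyps(2) this order_refl] show ?case .
  qed
qed

theorem lemma2:
  fixes N :: nat and t :: 's and Q :: "'s \<Rightarrow> 's \<Rightarrow> real"
    and R :: "nat \<Rightarrow> 'c \<Rightarrow> 's \<Rightarrow> 'c \<times> 's" and combine :: "'s set \<Rightarrow> 's"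
    and crit :: "nat \<Rightarrow> (nat \<Rightarrow> 's set option) \<Rightarrow> nat \<Rightarrow> 's \<Rightarrow> bool"
    and ctx0 :: "nat \<Rightarrow> 'c" and \<sigma> :: "('s, 'c) gstate" and s :: 's
  assumes refinement:
      "\<And>i c S s0. i < N \<Longrightarrow> finite S \<Longrightarrow> s0 \<in> S \<Longrightarrow> Q t s0 \<le> Q t (snd (R i c (combine S)))"
    and reach: "reachable N t R combine crit ctx0 \<sigma>"
    and out: "s \<in> outputs \<sigma>"
  shows "\<exists>s'. majority_optimal N t Q \<sigma> s' \<and> Q t s' \<le> Q t s"
proof -
  have "refinement_invariant N t Q \<sigma> \<sigma>"
    using refinement reach by (rule refinement_invariant_reachable)
  with out have "refinement_valid N t Q \<sigma> s" by (simp add: refinement_invariant_def)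
  then show ?thesis unfolding refinement_valid_def .
qed

end
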